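(* Identify $e_1,e_2,e_3$ with the three non-zero elements of the field $\mathbb F_4$ of order $4$. Let $g:1\to n$ be a morphism of $\mathbf{PCG}$ and $i,i(1),\dots,i(n)\in\{1,2,3\}$. If $\langle F(g)(e_i),e_{i(1)}\otimes\cdots\otimes e_{i(n)}\rangle\neq0$, then $e_i=e_{i(1)}+\cdots+e_{i(n)}$ in $\mathbb F_4$. Consequently, for any two morphisms $f,g:1\to n$ of $\mathbf{PCG}$, $\langle F(g)(e_i),F(f)(e_j)\rangle=0$ whenever $i\neq j$.
   Context: Let $\mathbb K$ be a field of characteristic zero, $V$ a $3$-dimensional $\mathbb K$-vector space with basis $\{e_1,e_2,e_3\}$, and $V^{\otimes n}$ carries the inner product making $\{e_{i(1)}\otimes\cdots\otimes e_{i(n)}\}$ orthonormal. $\mathbf{CG}$ is the strict monoidal category whose objects are non-negative integers and whose morphisms $m\to n$ are PL regular immersions in the strip $\mathbb R\times[0,1]$ of graphs with all vertices of degree $3$ except $m$ top and $n$ bottom free ends (closed vertex-free loops allowed); composition stacks, tensor places side by side. It is generated by $\cap:0\to2$, $\cup:2\to0$, $\lambda:1\to2$ (vertex with one top, two bottom ends), $y:2\to1$, $x:2\to2$ (crossing), $I=id_1$. $\mathbf{PCG}$ is the subcategory generated by $\cap,\cup,\lambda,y,I$ (planar graphs). The monoidal functor $F$ has $F(n)=V^{\otimes n}$, $F(\cap)(1)=\sum_i e_i\otimes e_i$, $F(\cup)(e_i\otimes e_j)=\delta_{i,j}$, $F(\lambda)(e_i)=\sum e_j\otimes e_k$ over ordered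 $(j,k)$ with $\{i,j,k\}=\{1,2,3\}$, $F(y)(e_i\otimes e_j)=e_k$ if $\{i,j,k\}=\{1,2,3\}$ and $0$ if $i=j$, $F(I)=id_V$. *)

theory Defs
  imports Main
begin

datatype idx = E1 | E2 | E3

(* The field F_4 = {0, 1, w, w^2}; only its additive structure is needed.
   F4_1, F4_w, F4_w2 are the three non-zero elements. *)
datatype f4 = F4_0 | F4_1 | F4_w | F4_w2

fun f4_add :: "f4 \<Rightarrow> f4 \<Rightarrow> f4" where
  "f4_add F4_0 b = b"
| "f4_add a F4_0 = a"
| "f4_add F4_1 F4_1 = F4_0"
| "f4_add F4_w F4_w = F4_0"
| "f4_add F4_w2 F4_w2 = F4_0"
| "f4_add F4_1 F4_w = F4_w2"
| "f4_add F4_w F4_1 = F4_w2"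
| "f4_add F4_1 F4_w2 = F4_w"
| "f4_add F4_w2 F4_1 = F4_w"
| "f4_add F4_w F4_w2 = F4_1"
| "f4_add F4_w2 F4_w = F4_1"

definition f4_sum :: "f4 list \<Rightarrow> f4" where
  "f4_sum xs = foldr f4_add xs F4_0"

fun to_f4 :: "idx \<Rightarrow> f4" where
  "to_f4 E1 = F4_1" | "to_f4 E2 = F4_w" | "to_f4 E3 = F4_w2"

(* Generators of PCG (no crossing x) *)
datatype pgen = Cap | Cup | Lam | Yv | Ione

(* Terms of the free strict monoidal category on these generators;
   every morphism of PCG is represented by such a term, and F is determined
   on it by functoriality and monoidality. *)
datatype pterm = Gen pgen | Idn nat | Comp pterm pterm | Tens pterm pterm
  (* Comp f g = "f then g" (g stacked below f) *)

fun gdom :: "pgen \<Rightarrow> nat" where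
  "gdom Cap = 0" | "gdom Cup = 2" | "gdom Lam = 1" | "gdom Yv = 2" | "gdom Ione = 1"
fun gcod :: "pgen \<Rightarrow> nat" where
  "gcod Cap = 2" | "gcod Cup = 0" | "gcod Lam = 2" | "gcod Yv = 1" | "gcod Ione = 1"

fun tdom :: "pterm \<Rightarrow> nat" and tcod :: "pterm \<Rightarrow> nat" where
  "tdom (Gen a) = gdom a"
| "tdom (Idn n) = n"
| "tdom (Comp f g) = tdom f"
| "tdom (Tens f g) = tdom f + tdom g"
| "tcod (Gen a) = gcod a"
| "tcod (Idn n) = n"
| "tcod (Comp f g) = tcod g"
| "tcod (Tens f g) = tcod f + tcod g"

fun wf_term :: "pterm \<Rightarrow> bool" where
  "wf_term (Gen a) = True"
| "wf_term (Idn n) = True"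
| "wf_term (Comp f g) = (wf_term f \<and> wf_term g \<and> tcod f = tdom g)"
| "wf_term (Tens f g) = (wf_term f \<and> wf_term g)"

definition pcg_hom :: "pterm \<Rightarrow> nat \<Rightarrow> nat \<Rightarrow> bool" where
  "pcg_hom t m n \<longleftrightarrow> wf_term t \<and> tdom t = m \<and> tcod t = n"

(* matrix of F on generators: entry (output basis word, input basis word) *)
fun gsem :: "pgen \<Rightarrow> idx list \<Rightarrow> idx list \<Rightarrow> 'a::field_char_0" where
  "gsem Cap y x = (case (y, x) of ([a, b], []) \<Rightarrow> (if a = b then 1 else 0) | _ \<Rightarrow> 0)"
| "gsem Cup y x = (case (y, x) of ([], [a, b]) \<Rightarrow> (if a = b then 1 else 0) | _ \<Rightarrow> 0)"
| "gsem Lam y x = (case (y, x) of ([j, k], [i]) \<Rightarrow> (if distinct [i, j, k] then 1 else 0) | _ \<Rightarrow> 0)"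
| "gsem Yv y x = (case (y, x) of ([k], [i, j]) \<Rightarrow> (if distinct [i, j, k] then 1 else 0) | _ \<Rightarrow> 0)"
| "gsem Ione y x = (case (y, x) of ([b], [a]) \<Rightarrow> (if a = b then 1 else 0) | _ \<Rightarrow> 0)"

fun Fsem :: "pterm \<Rightarrow> idx list \<Rightarrow> idx list \<Rightarrow> 'a::field_char_0" where
  "Fsem (Gen a) y x = gsem a y x"
| "Fsem (Idn n) y x = (if length x = n \<and> y = x then 1 else 0)"
| "Fsem (Comp f g) y x = (\<Sum>z\<in>{z. length z = tcod f}. Fsem g y z * Fsem f z x)"
| "Fsem (Tens f g) y x =
     (if length x = tdom f + tdom g \<and> length y = tcod f + tcod g
      then Fsem f (take (tcod f) y) (take (tdom f) x) * Fsem g (drop (tcod f) y) (drop (tdom f) x)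
      else 0)"

(* <F(t)(e_w), e_v> *)
definition Fcoef :: "pterm \<Rightarrow> idx list \<Rightarrow> idx list \<Rightarrow> 'a::field_char_0" where
  "Fcoef t w v = Fsem t v w"

(* <F(g)(e_i), F(f)(e_j)> for g, f : 1 \<rightarrow> n *)
definition Finner :: "nat \<Rightarrow> pterm \<Rightarrow> idx \<Rightarrow> pterm \<Rightarrow> idx \<Rightarrow> 'a::field_char_0" where
  "Finner n g i f j = (\<Sum>v\<in>{v. length v = n}. Fsem g v [i] * Fsem f v [j])"

end

theory Submission
  imports Defs
begin

(* Assign to a basis word e_{i(1)} \<otimes> ... \<otimes> e_{i(n)} its "charge"
   e_{i(1)} + ... + e_{i(n)} in the additive group of F_4, where e_1, e_2, e_3 are
   the non-zero elements.  Every generator of PCG only connects words of equal charge: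
   for cap and cup because x + x = 0 in characteristic 2, for the vertices because
   three distinct non-zero elements of F_4 sum to 0, i.e. e_i = e_j + e_k.  Charge is
   additive under concatenation of words, so by induction over terms every matrix
   entry of F(t) between words of different charge vanishes (for composition, a
   non-zero sum has a non-zero summand, which passes through an intermediate word).
   Part one of the theorem is this invariant for the input word [i]; part two follows
   since e_i and e_j have different charges when i \<noteq> j, so each summand of the
   inner product contains a vanishing factor. *)

lemma f4_add_0_right [simp]: "f4_add a F4_0 = a"
  by (cases a) auto

lemma f4_add_assoc: "f4_add (f4_add a b) c = f4_add a (f4_add b c)"
  by (cases a; cases b; cases c) auto

lemma f4_add_self: "f4_add a a = F4_0"
  by (cases a) auto

lemma f4_sum_append: "f4_sum (xs @ ys) = f4_add (f4_sum xs) (f4_sum ys)"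
  by (induction xs) (auto simp: f4_sum_def f4_add_assoc)

lemma f4_sum_singleton [simp]: "f4_sum [a] = a"
  by (simp add: f4_sum_def)

text \<open>Three distinct non-zero elements of F_4 sum to zero, so each is the sum of the
  other two; this is what makes the trivalent vertices charge preserving.\<close>
lemma to_f4_distinct_triple:
  "distinct [i, j, k] \<Longrightarrow> to_f4 i = f4_add (to_f4 j) (to_f4 k)"
  by (cases i; cases j; cases k) auto

lemma inj_to_f4: "inj to_f4"
proof (rule injI)
  fix i j :: idx
  show "to_f4 i = to_f4 j \<Longrightarrow> i = j"
    by (cases i; cases j) simp_all
qed

definition charge :: "idx list \<Rightarrow> f4" where
  "charge w = f4_sum (map to_f4 w)"

lemma charge_singleton [simp]: "charge [i] = to_f4 i"
  by (simp add: charge_def)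

lemma charge_append: "charge (u @ v) = f4_add (charge u) (charge v)"
  by (simp add: charge_def f4_sum_append)

lemma charge_take_drop: "charge w = f4_add (charge (take n w)) (charge (drop n w))"
  by (metis append_take_drop_id charge_append)

lemma gsem_charge:
  assumes "gsem a y x \<noteq> (0::'a::field_char_0)"
  shows "charge x = charge y"
proof (cases a)
  case Cap with assms show ?thesis
    by (auto simp: charge_def f4_sum_def f4_add_self split: list.splits if_splits)
next
  case Cup with assms show ?thesis
    by (auto simp: charge_def f4_sum_def f4_add_self split: list.splits if_splits)
next
  case Lam with assms show ?thesis
    by (auto simp: charge_def f4_sum_def split: list.splits if_splits
             intro: to_f4_distinct_triple)
next
  case Yv with assms show ?thesis
    by (auto simp: charge_def f4_sum_def split: list.splits if_splits
             intro: to_f4_distinct_triple[symmetric])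
next
  case Ione with assms show ?thesis
    by (auto simp: charge_def split: list.splits if_splits)
qed

text \<open>The charge invariant for arbitrary terms.\<close>
lemma Fsem_charge:
  assumes "Fsem t y x \<noteq> (0::'a::field_char_0)"
  shows "charge x = charge y"
  using assms
proof (induction t arbitrary: x y)
  case (Gen a)
  then show ?case by (intro gsem_charge) simp
next
  case (Idn n)
  then show ?case by (simp split: if_splits)
next
  case (Comp f g)
  from Comp.prems
  have "(\<Sum>z\<in>{z. length z = tcod f}. Fsem g y z * Fsem f z x) \<noteq> (0::'a)"
    unfolding Fsem.simps(3) .
  then obtain z where "Fsem g y z * Fsem f z x \<noteq> (0::'a)"
    using sum.not_neutral_contains_not_neutral by blast
  then have f_nz: "Fsem f z x \<noteq> (0::'a)" and g_nz: "Fsem g y z \<noteq> (0::'a)"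
    by simp_all
  show ?case
    using Comp.IH(1)[OF f_nz] Comp.IH(2)[OF g_nz] by (rule trans)
next
  case (Tens f g)
  from Tens.prems
  have f_nz: "Fsem f (take (tcod f) y) (take (tdom f) x) \<noteq> (0::'a)"
   and g_nz: "Fsem g (drop (tcod f) y) (drop (tdom f) x) \<noteq> (0::'a)"
    by (simp_all split: if_splits)
  show ?case
    using charge_take_drop[of x "tdom f"] charge_take_drop[of y "tcod f"]
      Tens.IH(1)[OF f_nz] Tens.IH(2)[OF g_nz] by simp
qed

lemma Finner_charge:
  assumes "to_f4 i \<noteq> to_f4 j"
  shows "(Finner n g i f j :: 'a::field_char_0) = 0"
  unfolding Finner_def
proof (rule sum.neutral, rule ballI)
  fix v
  have "Fsem g v [i] = (0::'a) \<or> Fsem f v [j] = (0::'a)"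
    using Fsem_charge[of g v "[i]"] Fsem_charge[of f v "[j]"] assms by force
  then show "Fsem g v [i] * Fsem f v [j] = (0::'a)" by auto
qed

theorem mainTheorem6:
  shows "(\<forall>(g::pterm) n i (is::idx list).
            pcg_hom g 1 n \<longrightarrow> length is = n \<longrightarrow>
            (Fcoef g [i] is :: 'a::field_char_0) \<noteq> 0 \<longrightarrow>
            to_f4 i = f4_sum (map to_f4 is))
       \<and> (\<forall>(f::pterm) (g::pterm) n i j.
            pcg_hom g 1 n \<longrightarrow> pcg_hom f 1 n \<longrightarrow> i \<noteq> j \<longrightarrow>
            (Finner n g i f j :: 'a::field_char_0) = 0)"
proof (intro conjI allI impI)
  fix g n i "is"
  assume "(Fcoef g [i] is :: 'a) \<noteq> 0"
  then have "charge [i] = charge is"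
    unfolding Fcoef_def by (rule Fsem_charge)
  then show "to_f4 i = f4_sum (map to_f4 is)"
    by (simp add: charge_def)
next
  fix f g n i j
  assume "(i::idx) \<noteq> j"
  then have "to_f4 i \<noteq> to_f4 j"
    using inj_to_f4 by (auto dest: injD)
  then show "(Finner n g i f j :: 'a) = 0"
    by (rule Finner_charge)
qed

end
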